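(* Let $R=k[x_1,\dots,x_n]$ be a standard graded polynomial ring over a field $k$, $I\subseteq R$ a homogeneous ideal and $(F_\bullet,d_\bullet)$ a homogeneous free resolution of $R/I$ with $F_0=R$. Write $F_1=F_1'\oplus\bigoplus_{i=1}^tRe_0^i$ where each $e_0^i$ generates a free direct summand, and write $d_2=d_2'+d_0^1+\cdots+d_0^t$ with $d_2':F_2\to F_1'$ and $d_0^i:F_2\to Re_0^i$ the components. For each $i$ let $\mathfrak a_i$ be a homogeneous ideal with $d_0^i(F_2)\subseteq\mathfrak a_ie_0^i$ and $(G^i_\bullet,m^i_\bullet)$ a homogeneous free resolution of $R/\mathfrak a_i$ with $G^i_0=R$. Let $K'=d_1(F_1')$, $K_0^i=(d_1(e_0^i))$ and $J=K'+\mathfrak a_1K_0^1+\cdots+\mathfrak a_tK_0^t$. For each $i$ let $(d_0^i)':F_2\to R$ be $d_0^i$ followed by $e_0^i\mapsto1$, and let $q^i_1:F_2\to G^i_1$, $q^i_k:F_{k+1}\to G^i_k$ ($k\ge2$) be homomorphisms with $m^i_1q^i_1=(d^i_0)'$ and $m^i_kq^i_k=q^i_{k-1}d_{k+1}$. Let $T_\bullet$ be the complex $\cdots\to F_3\xrightarrow{d_3}F_2\xrightarrow{d_2'}F_1'$ (with $F_1'$ in degree $0$, $F_i$ in degree $i-1$), and $B_\bullet$ the complex $\cdots\to\bigoplus_iG^i_2\xrightarrow{\oplus m_2^i}\bigoplus_iG^i_1\xrightarrow{\beta}R$ with $\beta(g_1,\dots,g_t)=-\sum_{i=1}^tm^i_1(g_i)\,d_1(e^i_0)$.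 Then $d_1|_{F_1'}:F_1'\to R$ together with the maps $(q^1_{k-1},\dots,q^t_{k-1})^T:F_k\to\bigoplus_iG^i_{k-1}$ ($k\ge2$) form a morphism of complexes $T_\bullet\to B_\bullet$ whose mapping cone is a free resolution of $R/J$.
   Context: The mapping cone has $R$ in degree $0$, $F_1'\oplus\bigoplus_iG^i_1$ in degree $1$, and $F_k\oplus\bigoplus_iG^i_k$ in degree $k\ge2$. It is called the iterated trimming complex. *)

theory Defs
  imports Main "HOL-Library.Poly_Mapping"
begin

text \<open>R = k[x_1,...,x_n] is modelled as finitely supported maps from monomials
  (exponent vectors 'v =>0 nat, with 'v a finite type of n variables) to coefficients in k.\<close>

type_synonym ('v, 'k) mpoly = "('v \<Rightarrow>\<^sub>0 nat) \<Rightarrow>\<^sub>0 'k"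

definition mon_deg :: "('v \<Rightarrow>\<^sub>0 nat) \<Rightarrow> nat" where
  "mon_deg m = (\<Sum>v\<in>Poly_Mapping.keys m. Poly_Mapping.lookup m v)"

text \<open>p is homogeneous of degree e (standard grading, every variable of degree 1);
  the zero polynomial is homogeneous of every degree, and only 0 is homogeneous of negative degree.\<close>
definition homog_of_deg :: "int \<Rightarrow> ('v, 'k::zero) mpoly \<Rightarrow> bool" where
  "homog_of_deg e p \<longleftrightarrow> (\<forall>m\<in>Poly_Mapping.keys p. int (mon_deg m) = e)"

definition is_ideal :: "'r::comm_ring_1 set \<Rightarrow> bool" where
  "is_ideal I \<longleftrightarrow> 0 \<in> I \<and> (\<forall>x\<in>I. \<forall>y\<in>I. x + y \<in> I) \<and> (\<forall>r. \<forall>x\<in>I. r * x \<in> I)"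

definition ideal_gen :: "'r::comm_ring_1 set \<Rightarrow> 'r set" where
  "ideal_gen S = \<Inter>{I. is_ideal I \<and> S \<subseteq> I}"

definition ideal_prod :: "'r::comm_ring_1 set \<Rightarrow> 'r set \<Rightarrow> 'r set" where
  "ideal_prod A B = ideal_gen {a * b |a b. a \<in> A \<and> b \<in> B}"

definition homog_ideal :: "('v, 'k::comm_ring_1) mpoly set \<Rightarrow> bool" where
  "homog_ideal I \<longleftrightarrow> is_ideal I \<and> I = ideal_gen {p \<in> I. \<exists>e. homog_of_deg e p}"

text \<open>A free module with basis indexed by the set B (of some index type 'b) is
  the module of finitely supported coordinate vectors v :: 'b => R vanishing off B.
  A homomorphism out of it is given by the images D j of the basis vectors e_j;
  D j i is the coefficient of the basis vector e_i of the target in D(e_j).\<close>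

definition fvec :: "'b set \<Rightarrow> ('b \<Rightarrow> 'r::comm_ring_1) set" where
  "fvec B = {v. finite {j. v j \<noteq> 0} \<and> (\<forall>j. j \<notin> B \<longrightarrow> v j = 0)}"

definition lapply :: "('b \<Rightarrow> 'c \<Rightarrow> 'r::comm_ring_1) \<Rightarrow> ('b \<Rightarrow> 'r) \<Rightarrow> 'c \<Rightarrow> 'r" where
  "lapply D v = (\<lambda>i. \<Sum>j\<in>{j. v j \<noteq> 0}. v j * D j i)"

definition is_hom :: "'b set \<Rightarrow> 'c set \<Rightarrow> ('b \<Rightarrow> 'c \<Rightarrow> 'r::comm_ring_1) \<Rightarrow> bool" where
  "is_hom B C D \<longleftrightarrow> (\<forall>j\<in>B. D j \<in> fvec C)"

definition free_complex :: "(nat \<Rightarrow> 'b set) \<Rightarrow> (nat \<Rightarrow> 'b \<Rightarrow> 'b \<Rightarrow> 'r::comm_ring_1) \<Rightarrow> bool" where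
  "free_complex B D \<longleftrightarrow>
     (\<forall>n\<ge>1. is_hom (B n) (B (n - 1)) (D n)) \<and>
     (\<forall>n\<ge>1. \<forall>v\<in>fvec (B (Suc n)). lapply (D n) (lapply (D (Suc n)) v) = (\<lambda>_. 0))"

text \<open>A free resolution of R/I with 0-th module R (basis a single element b0,
  augmentation the canonical map R -> R/I): a complex, exact in all degrees n >= 1,
  with image of D 1 equal to I.\<close>

definition free_res :: "(nat \<Rightarrow> 'b set) \<Rightarrow> (nat \<Rightarrow> 'b \<Rightarrow> 'b \<Rightarrow> 'r::comm_ring_1) \<Rightarrow> 'r set \<Rightarrow> bool" where
  "free_res B D I \<longleftrightarrow> free_complex B D \<and>
     (\<exists>b0. B 0 = {b0} \<and> {lapply (D 1) v b0 |v. v \<in> fvec (B 1)} = I) \<and>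
     (\<forall>n\<ge>1. {v \<in> fvec (B n). lapply (D n) v = (\<lambda>_. 0)} = lapply (D (Suc n)) ` fvec (B (Suc n)))"

text \<open>Homogeneous (graded) free resolution: in addition each basis element carries a degree
  (the 0-th module being R = R(0)) and all differentials are homogeneous of degree 0.\<close>

definition homog_free_res :: "(nat \<Rightarrow> 'b set) \<Rightarrow> (nat \<Rightarrow> 'b \<Rightarrow> 'b \<Rightarrow> ('v, 'k::comm_ring_1) mpoly)
     \<Rightarrow> ('v, 'k) mpoly set \<Rightarrow> bool" where
  "homog_free_res B D I \<longleftrightarrow> free_res B D I \<and>
     (\<exists>deg :: nat \<Rightarrow> 'b \<Rightarrow> int. (\<forall>b\<in>B 0. deg 0 b = 0) \<and>
        (\<forall>n\<ge>1. \<forall>j\<in>B n. \<forall>i\<in>B (n - 1). homog_of_deg (deg n j - deg (n - 1) i) (D n j i)))"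

definition chain_map :: "(nat \<Rightarrow> 'a set) \<Rightarrow> (nat \<Rightarrow> 'a \<Rightarrow> 'a \<Rightarrow> 'r::comm_ring_1)
    \<Rightarrow> (nat \<Rightarrow> 'b set) \<Rightarrow> (nat \<Rightarrow> 'b \<Rightarrow> 'b \<Rightarrow> 'r) \<Rightarrow> (nat \<Rightarrow> 'a \<Rightarrow> 'b \<Rightarrow> 'r) \<Rightarrow> bool" where
  "chain_map BT DT BB DB phi \<longleftrightarrow>
     (\<forall>n. is_hom (BT n) (BB n) (phi n)) \<and>
     (\<forall>n\<ge>1. \<forall>v\<in>fvec (BT n). lapply (phi (n - 1)) (lapply (DT n) v) = lapply (DB n) (lapply (phi n) v))"

text \<open>Mapping cone: Cone_n = T_{n-1} (+) B_n (T_{-1} = 0), differential (a,b) |-> (-d a, phi a + d b).\<close>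

definition cone_basis :: "(nat \<Rightarrow> 'a set) \<Rightarrow> (nat \<Rightarrow> 'b set) \<Rightarrow> nat \<Rightarrow> ('a + 'b) set" where
  "cone_basis BT BB n = (if n = 0 then {} else Inl ` BT (n - 1)) \<union> Inr ` BB n"

definition cone_diff :: "(nat \<Rightarrow> 'a \<Rightarrow> 'a \<Rightarrow> 'r::comm_ring_1) \<Rightarrow> (nat \<Rightarrow> 'b \<Rightarrow> 'b \<Rightarrow> 'r)
    \<Rightarrow> (nat \<Rightarrow> 'a \<Rightarrow> 'b \<Rightarrow> 'r) \<Rightarrow> nat \<Rightarrow> 'a + 'b \<Rightarrow> 'a + 'b \<Rightarrow> 'r" where
  "cone_diff DT DB phi n c c' =
     (case c of
        Inl a \<Rightarrow> (case c' of Inl a' \<Rightarrow> (if n \<le> 1 then 0 else - DT (n - 1) a a')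
                            | Inr b' \<Rightarrow> phi (n - 1) a b')
      | Inr b \<Rightarrow> (case c' of Inl _ \<Rightarrow> 0 | Inr b' \<Rightarrow> DB n b b'))"

text \<open>The resolution F uses basis indices nat; F_0 = R has basis {0}; the elements e_0^i
  (i = 1..t) are the basis elements e0 i of F_1, and F_1' is spanned by the remaining ones.\<close>

text \<open>T: T_0 = F_1', T_n = F_{n+1}; differentials d_2' (= d_2 followed by projection to F_1') and d_{n+1}.\<close>
definition T_basis :: "(nat \<Rightarrow> nat set) \<Rightarrow> (nat \<Rightarrow> nat) \<Rightarrow> nat \<Rightarrow> nat \<Rightarrow> nat set" where
  "T_basis BF e0 t n = (if n = 0 then BF 1 - e0 ` {1..t} else BF (Suc n))"

definition T_diff :: "(nat \<Rightarrow> nat \<Rightarrow> nat \<Rightarrow> 'r::comm_ring_1) \<Rightarrow> (nat \<Rightarrow> nat) \<Rightarrow> nat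
    \<Rightarrow> nat \<Rightarrow> nat \<Rightarrow> nat \<Rightarrow> 'r" where
  "T_diff dF e0 t n j j' =
     (if n = 0 then 0
      else if n = 1 then (if j' \<in> e0 ` {1..t} then 0 else dF 2 j j')
      else dF (Suc n) j j')"

text \<open>B: B_0 = R (basis {(0,0)}), B_n = (+)_{i=1..t} G^i_n (basis pairs (i,g));
  differential beta in degree 1, (+)_i m^i_n in degree n >= 2.\<close>
definition B_basis :: "(nat \<Rightarrow> nat \<Rightarrow> nat set) \<Rightarrow> nat \<Rightarrow> nat \<Rightarrow> (nat \<times> nat) set" where
  "B_basis BG t n = (if n = 0 then {(0, 0)} else {(i, g). i \<in> {1..t} \<and> g \<in> BG i n})"

definition B_diff :: "(nat \<Rightarrow> nat \<Rightarrow> nat \<Rightarrow> nat \<Rightarrow> 'r::comm_ring_1) \<Rightarrow> (nat \<Rightarrow> nat \<Rightarrow> nat \<Rightarrow> 'r)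
    \<Rightarrow> (nat \<Rightarrow> nat) \<Rightarrow> nat \<Rightarrow> nat \<times> nat \<Rightarrow> nat \<times> nat \<Rightarrow> 'r" where
  "B_diff mG dF e0 n c c' =
     (if n = 0 then 0
      else if n = 1 then (if c' = (0, 0) then - (mG (fst c) 1 (snd c) 0 * dF 1 (e0 (fst c)) 0) else 0)
      else (if fst c = fst c' then mG (fst c) n (snd c) (snd c') else 0))"

text \<open>The morphism: phi_0 = d_1 restricted to F_1' (into R), phi_n = (q^1_n,...,q^t_n)^T : F_{n+1} -> (+)_i G^i_n.\<close>
definition trim_phi :: "(nat \<Rightarrow> nat \<Rightarrow> nat \<Rightarrow> 'r::comm_ring_1) \<Rightarrow> (nat \<Rightarrow> nat \<Rightarrow> nat \<Rightarrow> nat \<Rightarrow> 'r)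
    \<Rightarrow> nat \<Rightarrow> nat \<Rightarrow> nat \<Rightarrow> nat \<times> nat \<Rightarrow> 'r" where
  "trim_phi dF q t n j c' =
     (if n = 0 then (if c' = (0, 0) then dF 1 j 0 else 0)
      else (if fst c' \<in> {1..t} then q (fst c') n j (snd c') else 0))"

definition trim_J :: "(nat \<Rightarrow> nat set) \<Rightarrow> (nat \<Rightarrow> nat \<Rightarrow> nat \<Rightarrow> 'r::comm_ring_1) \<Rightarrow> (nat \<Rightarrow> nat)
    \<Rightarrow> nat \<Rightarrow> (nat \<Rightarrow> 'r set) \<Rightarrow> 'r set" where
  "trim_J BF dF e0 t a =
     {x + (\<Sum>i\<in>{1..t}. y i) |x y.
        x \<in> {lapply (dF 1) v 0 |v. v \<in> fvec (BF 1 - e0 ` {1..t})} \<and>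
        (\<forall>i\<in>{1..t}. y i \<in> ideal_prod (a i) (ideal_gen {dF 1 (e0 i) 0}))}"

end

theory Submission
  imports Defs
begin

(* The cone of a chain map is a complex, so only exactness and the image of the last differential
   need work. A cycle (x, y) of the cone in degree n >= 1, with x in T_{n-1} and y in B_n, is a
   boundary as soon as x = d a for some a in F_{n+1} and every component y_i + q^i_n(a) is an
   m^i_n-cycle: exactness of G^i then lifts these components, and (-a, lifts) maps to (x, y).
   The cycle condition gives the second requirement; the first uses exactness of F once x is known
   to be a cycle of F. For n >= 3 this is immediate, for n = 2 the e_0^i-coordinates of d_2 x equal
   m^i_1 q^i_1 x = -m^i_1 m^i_2 y_i = 0, and for n = 1 one lifts the d_1-cycle x + sum_i c_i e_0^i
   with c_i = -m^i_1(y_i) instead. *)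

section \<open>Free modules with a chosen basis\<close>

lemma fvecI: "finite {j. v j \<noteq> 0} \<Longrightarrow> (\<And>j. j \<notin> B \<Longrightarrow> v j = 0) \<Longrightarrow> v \<in> fvec B"
  by (simp add: fvec_def)

lemma fvec_finite_support: "v \<in> fvec B \<Longrightarrow> finite {j. v j \<noteq> 0}"
  by (simp add: fvec_def)

lemma fvec_vanishes: "v \<in> fvec B \<Longrightarrow> j \<notin> B \<Longrightarrow> v j = 0"
  by (simp add: fvec_def)

lemma fvec_zero: "(\<lambda>_. 0) \<in> fvec B"
  by (simp add: fvec_def)

lemma fvec_uminus: "v \<in> fvec B \<Longrightarrow> (\<lambda>j. - v j) \<in> fvec B"
  by (simp add: fvec_def)

lemma fvec_add:
  assumes "v \<in> fvec B" "w \<in> fvec B"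
  shows "(\<lambda>j. v j + w j) \<in> fvec B"
proof (rule fvecI)
  have "{j. v j + w j \<noteq> 0} \<subseteq> {j. v j \<noteq> 0} \<union> {j. w j \<noteq> 0}" by auto
  then show "finite {j. v j + w j \<noteq> 0}"
    by (rule finite_subset) (use assms in \<open>simp add: fvec_finite_support\<close>)
qed (use assms in \<open>simp add: fvec_vanishes\<close>)

lemma lapply_eq_sum_superset:
  assumes "finite S" "{j. v j \<noteq> 0} \<subseteq> S"
  shows "lapply D v i = (\<Sum>j\<in>S. v j * D j i)"
  unfolding lapply_def by (rule sum.mono_neutral_left[OF assms]) auto

lemma lapply_add:
  assumes "finite {j. u j \<noteq> 0}" "finite {j. w j \<noteq> 0}"
  shows "lapply D (\<lambda>j. u j + w j) i = lapply D u i + lapply D w i"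
proof -
  let ?S = "{j. u j \<noteq> 0} \<union> {j. w j \<noteq> 0}"
  have S: "finite ?S" using assms by simp
  have "lapply D (\<lambda>j. u j + w j) i = (\<Sum>j\<in>?S. (u j + w j) * D j i)"
    by (rule lapply_eq_sum_superset[OF S]) auto
  also have "\<dots> = (\<Sum>j\<in>?S. u j * D j i) + (\<Sum>j\<in>?S. w j * D j i)"
    by (simp add: distrib_right sum.distrib)
  also have "\<dots> = lapply D u i + lapply D w i"
    using lapply_eq_sum_superset[OF S, of u D i] lapply_eq_sum_superset[OF S, of w D i] by auto
  finally show ?thesis .
qed

lemma lapply_uminus: "lapply D (\<lambda>j. - u j) i = - lapply D u i"
  by (simp add: lapply_def sum_negf)

lemma lapply_zero: "lapply D (\<lambda>_. 0) = (\<lambda>_. 0)"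
  by (simp add: lapply_def fun_eq_iff)

lemma lapply_fvec:
  assumes D: "is_hom B C D" and v: "v \<in> fvec B"
  shows "lapply D v \<in> fvec C"
proof (rule fvecI)
  have D_col: "D j \<in> fvec C" if "v j \<noteq> 0" for j
    using D fvec_vanishes[OF v] that unfolding is_hom_def by blast
  have "lapply D v i = 0" if "\<forall>j. v j \<noteq> 0 \<longrightarrow> D j i = 0" for i
    unfolding lapply_def using that by (simp add: sum.neutral)
  then have "{i. lapply D v i \<noteq> 0} \<subseteq> (\<Union>j\<in>{j. v j \<noteq> 0}. {i. D j i \<noteq> 0})"
    by blast
  moreover have "finite (\<Union>j\<in>{j. v j \<noteq> 0}. {i. D j i \<noteq> 0})"
    using fvec_finite_support[OF v] fvec_finite_support[OF D_col] by blast
  ultimately show "finite {i. lapply D v i \<noteq> 0}" by (rule finite_subset)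
  show "lapply D v i = 0" if "i \<notin> C" for i
    unfolding lapply_def using fvec_vanishes[OF D_col that] by (auto intro: sum.neutral)
qed

lemma lapply_split_image:
  assumes fin: "finite {j. w j \<noteq> 0}" and I: "finite I" and f: "inj_on f I"
  shows "lapply D w x = lapply D (\<lambda>j. if j \<in> f ` I then 0 else w j) x + (\<Sum>i\<in>I. w (f i) * D (f i) x)"
proof -
  let ?S = "{j. w j \<noteq> 0} \<union> f ` I"
  have S: "finite ?S" using fin I by simp
  have "lapply D w x = (\<Sum>j\<in>?S - f ` I. w j * D j x) + (\<Sum>j\<in>f ` I. w j * D j x)"
    using lapply_eq_sum_superset[OF S, of w D x] sum.subset_diff[of "f ` I" ?S] S by auto
  moreover have "lapply D (\<lambda>j. if j \<in> f ` I then 0 else w j) x = (\<Sum>j\<in>?S - f ` I. w j * D j x)"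
    by (subst lapply_eq_sum_superset[of "?S - f ` I"]) (use S in auto)
  moreover have "(\<Sum>j\<in>f ` I. w j * D j x) = (\<Sum>i\<in>I. w (f i) * D (f i) x)"
    by (simp add: sum.reindex[OF f])
  ultimately show ?thesis by simp
qed

section \<open>Direct sums and mapping cones\<close>

lemma fvec_Sigma_slice: "v \<in> fvec (Sigma I C) \<Longrightarrow> (\<lambda>x. v (i, x)) \<in> fvec (C i)"
proof (rule fvecI)
  assume v: "v \<in> fvec (Sigma I C)"
  show "finite {x. v (i, x) \<noteq> 0}"
    using finite_vimageI[OF fvec_finite_support[OF v], of "Pair i"] by (simp add: vimage_def inj_on_def)
  show "v (i, x) = 0" if "x \<notin> C i" for x
    using fvec_vanishes[OF v] that by blast
qed

lemma fvec_Sigma_glue: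
  assumes "finite I" and "\<forall>i\<in>I. g i \<in> fvec (C i)"
  shows "(\<lambda>c. if fst c \<in> I then g (fst c) (snd c) else 0) \<in> fvec (Sigma I C)"
proof (rule fvecI)
  have "{c. (if fst c \<in> I then g (fst c) (snd c) else 0) \<noteq> 0} \<subseteq> Sigma I (\<lambda>i. {x. g i x \<noteq> 0})"
    by (auto split: if_splits)
  then show "finite {c. (if fst c \<in> I then g (fst c) (snd c) else 0) \<noteq> 0}"
    by (rule finite_subset) (use assms in \<open>auto intro!: finite_SigmaI fvec_finite_support\<close>)
  show "(if fst c \<in> I then g (fst c) (snd c) else 0) = 0" if "c \<notin> Sigma I C" for c
    using that assms(2) by (cases c) (auto simp: fvec_vanishes)
qed

lemma lapply_Sigma:
  assumes I: "finite I" and v: "v \<in> fvec (Sigma I C)"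
  shows "lapply D v y = (\<Sum>i\<in>I. lapply (\<lambda>x. D (i, x)) (\<lambda>x. v (i, x)) y)"
proof -
  have "{c. v c \<noteq> 0} = Sigma I (\<lambda>i. {x. v (i, x) \<noteq> 0})"
    using fvec_vanishes[OF v] by fastforce
  then show ?thesis
    unfolding lapply_def
    using sum.Sigma[OF I, of "\<lambda>i. {x. v (i, x) \<noteq> 0}" "\<lambda>i x. v (i, x) * D (i, x) y"]
      fvec_finite_support[OF fvec_Sigma_slice[OF v]] by (simp add: case_prod_beta)
qed

definition diag_sum :: "('i \<Rightarrow> 'b \<Rightarrow> 'c \<Rightarrow> 'r::zero) \<Rightarrow> 'i \<times> 'b \<Rightarrow> 'i \<times> 'c \<Rightarrow> 'r" where
  "diag_sum M c c' = (if fst c = fst c' then M (fst c) (snd c) (snd c') else 0)"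

lemma lapply_diag_sum:
  assumes fin: "finite {c. v c \<noteq> 0}"
  shows "lapply (diag_sum M) v (i, y) = lapply (M i) (\<lambda>x. v (i, x)) y"
proof -
  have "lapply (diag_sum M) v (i, y) = (\<Sum>c\<in>{c. v c \<noteq> 0}. if fst c = i then v c * M i (snd c) y else 0)"
    unfolding lapply_def by (intro sum.cong) (auto simp: diag_sum_def)
  also have "\<dots> = (\<Sum>c\<in>Pair i ` {x. v (i, x) \<noteq> 0}. v c * M i (snd c) y)"
    by (subst sum.inter_filter[OF fin, symmetric]) (auto intro: sum.cong)
  also have "\<dots> = lapply (M i) (\<lambda>x. v (i, x)) y"
    by (subst sum.reindex) (auto simp: inj_on_def lapply_def)
  finally show ?thesis .
qed

lemma is_hom_diag_sum:
  assumes "\<forall>i\<in>I. is_hom (C i) (C' i) (M i)"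
  shows "is_hom (Sigma I C) (Sigma I C') (diag_sum M)"
  unfolding is_hom_def
proof
  fix c assume "c \<in> Sigma I C"
  then obtain i g where c: "c = (i, g)" and col: "M i g \<in> fvec (C' i)"
    using assms unfolding is_hom_def by blast
  show "diag_sum M c \<in> fvec (Sigma I C')"
  proof (rule fvecI)
    have "{c'. diag_sum M c c' \<noteq> 0} \<subseteq> Pair i ` {x. M i g x \<noteq> 0}"
      by (auto simp: c diag_sum_def split: if_splits)
    then show "finite {c'. diag_sum M c c' \<noteq> 0}"
      by (rule finite_subset) (use fvec_finite_support[OF col] in simp)
    show "diag_sum M c c' = 0" if "c' \<notin> Sigma I C'" for c'
      using that fvec_vanishes[OF col] \<open>c \<in> Sigma I C\<close> by (cases c') (auto simp: c diag_sum_def)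
  qed
qed

lemma diag_sum_boundaryI:
  assumes I: "finite I" and u: "u \<in> fvec (Sigma I C')"
    and slices: "\<forall>i\<in>I. (\<lambda>x. u (i, x)) \<in> lapply (N i) ` fvec (C i)"
  shows "u \<in> lapply (diag_sum N) ` fvec (Sigma I C)"
proof -
  obtain g where g: "\<forall>i\<in>I. g i \<in> fvec (C i) \<and> lapply (N i) (g i) = (\<lambda>x. u (i, x))"
    using slices by (simp add: image_iff) metis
  define w where "w c = (if fst c \<in> I then g (fst c) (snd c) else 0)" for c
  have w: "w \<in> fvec (Sigma I C)"
    unfolding w_def[abs_def] by (rule fvec_Sigma_glue) (use I g in auto)
  have "lapply (diag_sum N) w (i, y) = u (i, y)" for i y
  proof (cases "i \<in> I")
    case True
    then have "(\<lambda>x. w (i, x)) = g i" by (simp add: w_def)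
    then show ?thesis
      using g True by (simp add: lapply_diag_sum[OF fvec_finite_support[OF w]] fun_eq_iff)
  next
    case False
    then have "(\<lambda>x. w (i, x)) = (\<lambda>_. 0)" by (simp add: w_def)
    then show ?thesis
      using False fvec_vanishes[OF u, of "(i, y)"]
      by (simp add: lapply_diag_sum[OF fvec_finite_support[OF w]] lapply_zero)
  qed
  then have "lapply (diag_sum N) w = u" by (simp add: fun_eq_iff)
  with w show ?thesis by blast
qed

lemma fvec_Plus_iff:
  "f \<in> fvec (Inl ` A \<union> Inr ` B) \<longleftrightarrow> (\<lambda>a. f (Inl a)) \<in> fvec A \<and> (\<lambda>b. f (Inr b)) \<in> fvec B"
proof -
  have supp: "{c. f c \<noteq> 0} = Inl ` {a. f (Inl a) \<noteq> 0} \<union> Inr ` {b. f (Inr b) \<noteq> 0}"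
    by (rule set_eqI, rename_tac c, case_tac c) auto
  have "finite {c. f c \<noteq> 0} \<longleftrightarrow> finite {a. f (Inl a) \<noteq> 0} \<and> finite {b. f (Inr b) \<noteq> 0}"
    unfolding supp by (simp add: finite_image_iff)
  then show ?thesis
    unfolding fvec_def by (auto, rename_tac c, case_tac c, auto)
qed

lemma lapply_Plus:
  assumes "finite {c. v c \<noteq> 0}"
  shows "lapply D v x = lapply (\<lambda>a. D (Inl a)) (\<lambda>a. v (Inl a)) x + lapply (\<lambda>b. D (Inr b)) (\<lambda>b. v (Inr b)) x"
proof -
  let ?L = "{a. v (Inl a) \<noteq> 0}" and ?R = "{b. v (Inr b) \<noteq> 0}"
  have supp: "{c. v c \<noteq> 0} = Inl ` ?L \<union> Inr ` ?R"
    by (rule set_eqI, rename_tac c, case_tac c) auto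
  have "finite ?L" "finite ?R"
    using assms unfolding supp by (simp_all add: finite_image_iff)
  then show ?thesis
    unfolding lapply_def supp by (subst sum.union_disjoint) (auto simp: sum.reindex)
qed

lemma free_complex_exactI:
  fixes D :: "nat \<Rightarrow> 'b \<Rightarrow> 'b \<Rightarrow> 'r::comm_ring_1"
  assumes cx: "free_complex B D" and n: "n \<ge> 1"
    and cycles: "\<And>v. v \<in> fvec (B n) \<Longrightarrow> lapply (D n) v = (\<lambda>_. 0) \<Longrightarrow> v \<in> lapply (D (Suc n)) ` fvec (B (Suc n))"
  shows "{v \<in> fvec (B n). lapply (D n) v = (\<lambda>_. 0)} = lapply (D (Suc n)) ` fvec (B (Suc n))"
proof
  have hom: "is_hom (B (Suc n)) (B n) (D (Suc n))"
    using conjunct1[OF cx[unfolded free_complex_def], rule_format, of "Suc n"] by simp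
  show "lapply (D (Suc n)) ` fvec (B (Suc n)) \<subseteq> {v \<in> fvec (B n). lapply (D n) v = (\<lambda>_. 0)}"
  proof (rule image_subsetI)
    fix w :: "'b \<Rightarrow> 'r" assume w: "w \<in> fvec (B (Suc n))"
    show "lapply (D (Suc n)) w \<in> {v \<in> fvec (B n). lapply (D n) v = (\<lambda>_. 0)}"
      using lapply_fvec[OF hom w] conjunct2[OF cx[unfolded free_complex_def], rule_format, OF n w] by simp
  qed
qed (use cycles in blast)

lemma cone_basis_Suc: "cone_basis BT BB (Suc n) = Inl ` BT n \<union> Inr ` BB (Suc n)"
  by (simp add: cone_basis_def)

lemma fvec_cone_basis_iff:
  "v \<in> fvec (cone_basis BT BB n) \<longleftrightarrow>
     (\<lambda>a. v (Inl a)) \<in> fvec (if n = 0 then {} else BT (n - 1)) \<and> (\<lambda>b. v (Inr b)) \<in> fvec (BB n)"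
  using fvec_Plus_iff[of v "{}" "BB n"] by (cases n) (simp_all add: cone_basis_def fvec_Plus_iff)

lemma lapply_cone_diff_Inl:
  assumes "finite {c. v c \<noteq> 0}"
  shows "lapply (cone_diff DT DB phi n) v (Inl a') =
           (if n \<le> 1 then 0 else - lapply (DT (n - 1)) (\<lambda>a. v (Inl a)) a')"
  unfolding lapply_Plus[OF assms] by (simp add: cone_diff_def lapply_def sum_negf)

lemma lapply_cone_diff_Inr:
  assumes "finite {c. v c \<noteq> 0}"
  shows "lapply (cone_diff DT DB phi n) v (Inr b') =
           lapply (phi (n - 1)) (\<lambda>a. v (Inl a)) b' + lapply (DB n) (\<lambda>b. v (Inr b)) b'"
  unfolding lapply_Plus[OF assms] by (simp add: cone_diff_def lapply_def)

lemma is_hom_cone_diff: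
  assumes T: "free_complex BT DT" and B: "free_complex BB DB" and phi: "chain_map BT DT BB DB phi"
  shows "is_hom (cone_basis BT BB (Suc n)) (cone_basis BT BB n) (cone_diff DT DB phi (Suc n))"
  unfolding is_hom_def
proof
  have DT: "DT (Suc m) a \<in> fvec (BT m)" if "a \<in> BT (Suc m)" for m a
    using T that unfolding free_complex_def is_hom_def by fastforce
  have DB: "DB (Suc m) b \<in> fvec (BB m)" if "b \<in> BB (Suc m)" for m b
    using B that unfolding free_complex_def is_hom_def by fastforce
  have phi: "phi m a \<in> fvec (BB m)" if "a \<in> BT m" for m a
    using phi that unfolding chain_map_def is_hom_def by blast
  fix c assume c: "c \<in> cone_basis BT BB (Suc n)"
  show "cone_diff DT DB phi (Suc n) c \<in> fvec (cone_basis BT BB n)"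
  proof (cases c)
    case (Inl a)
    then have "a \<in> BT n" using c by (auto simp: cone_basis_Suc)
    then show ?thesis
      using Inl unfolding fvec_cone_basis_iff by (cases n) (auto simp: cone_diff_def fvec_zero phi intro!: fvec_uminus DT)
  next
    case (Inr b)
    then have "b \<in> BB (Suc n)" using c by (auto simp: cone_basis_Suc)
    then show ?thesis
      using Inr unfolding fvec_cone_basis_iff by (simp add: cone_diff_def fvec_zero DB)
  qed
qed

lemma cone_diff_diff:
  fixes DT :: "nat \<Rightarrow> 'a \<Rightarrow> 'a \<Rightarrow> 'r::comm_ring_1" and DB :: "nat \<Rightarrow> 'b \<Rightarrow> 'b \<Rightarrow> 'r"
  assumes T: "free_complex BT DT" and B: "free_complex BB DB" and phi: "chain_map BT DT BB DB phi"
    and n: "n \<ge> 1" and v: "v \<in> fvec (cone_basis BT BB (Suc n))"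
  shows "lapply (cone_diff DT DB phi n) (lapply (cone_diff DT DB phi (Suc n)) v) = (\<lambda>_. 0)"
proof -
  let ?vl = "\<lambda>a. v (Inl a)" and ?vr = "\<lambda>b. v (Inr b)"
  have vl: "?vl \<in> fvec (BT n)" and vr: "?vr \<in> fvec (BB (Suc n))"
    using v unfolding cone_basis_Suc fvec_Plus_iff by auto
  have DB_hom: "is_hom (BB (Suc n)) (BB n) (DB (Suc n))" and phi_hom: "is_hom (BT n) (BB n) (phi n)"
    using B phi unfolding free_complex_def chain_map_def by auto
  define w where "w = lapply (cone_diff DT DB phi (Suc n)) v"
  have w: "w \<in> fvec (cone_basis BT BB n)"
    unfolding w_def by (rule lapply_fvec[OF is_hom_cone_diff[OF T B phi] v])
  have wl: "(\<lambda>a. w (Inl a)) = (\<lambda>a. - lapply (DT n) ?vl a)"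
    using n by (simp add: w_def lapply_cone_diff_Inl[OF fvec_finite_support[OF v]])
  have wr: "(\<lambda>b. w (Inr b)) = (\<lambda>b. lapply (phi n) ?vl b + lapply (DB (Suc n)) ?vr b)"
    by (simp add: w_def lapply_cone_diff_Inr[OF fvec_finite_support[OF v]])
  have dd_T: "lapply (DT (n - 1)) (lapply (DT n) ?vl) = (\<lambda>_. 0)" if "n \<ge> 2"
  proof -
    have "n - 1 \<ge> 1" and "Suc (n - 1) = n" using that by auto
    then show ?thesis
      using conjunct2[OF T[unfolded free_complex_def], rule_format, of "n - 1" ?vl] vl by simp
  qed
  have dd_B: "lapply (DB n) (lapply (DB (Suc n)) ?vr) = (\<lambda>_. 0)"
    using B vr n unfolding free_complex_def by blast
  have phi_chain: "lapply (phi (n - 1)) (lapply (DT n) ?vl) = lapply (DB n) (lapply (phi n) ?vl)"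
    using phi vl n unfolding chain_map_def by blast
  have Inl: "lapply (cone_diff DT DB phi n) w (Inl a') = 0" for a'
    using dd_T by (simp add: lapply_cone_diff_Inl[OF fvec_finite_support[OF w]] wl lapply_uminus)
  have Inr: "lapply (cone_diff DT DB phi n) w (Inr b') = 0" for b'
    using dd_B phi_chain
    by (simp add: lapply_cone_diff_Inr[OF fvec_finite_support[OF w]] wl wr lapply_uminus
        lapply_add[OF fvec_finite_support[OF lapply_fvec[OF phi_hom vl]]
                      fvec_finite_support[OF lapply_fvec[OF DB_hom vr]]])
  show ?thesis
  proof
    fix c show "lapply (cone_diff DT DB phi n) (lapply (cone_diff DT DB phi (Suc n)) v) c = 0"
      unfolding w_def[symmetric] using Inl Inr by (cases c) simp_all
  qed
qed

lemma free_complex_cone: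
  assumes "free_complex BT DT" and "free_complex BB DB" and "chain_map BT DT BB DB phi"
  shows "free_complex (cone_basis BT BB) (cone_diff DT DB phi)"
  unfolding free_complex_def
proof (intro conjI allI impI ballI)
  show "is_hom (cone_basis BT BB n) (cone_basis BT BB (n - 1)) (cone_diff DT DB phi n)" if "n \<ge> 1" for n
    using is_hom_cone_diff[OF assms, of "n - 1"] that by simp
qed (rule cone_diff_diff[OF assms])

lemma cone_boundaryI:
  assumes n: "n \<ge> 1" and al: "al \<in> fvec (BT n)" and br: "br \<in> fvec (BB (Suc n))"
    and vl: "\<And>a'. v (Inl a') = - lapply (DT n) al a'"
    and vr: "\<And>b'. v (Inr b') = lapply (phi n) al b' + lapply (DB (Suc n)) br b'"
  shows "v \<in> lapply (cone_diff DT DB phi (Suc n)) ` fvec (cone_basis BT BB (Suc n))"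
proof
  let ?w = "case_sum al br"
  show w: "?w \<in> fvec (cone_basis BT BB (Suc n))"
    unfolding cone_basis_Suc fvec_Plus_iff using al br by simp
  have "lapply (cone_diff DT DB phi (Suc n)) ?w c = v c" for c
    using n vl vr
    by (cases c) (simp_all add: lapply_cone_diff_Inl[OF fvec_finite_support[OF w]]
                                lapply_cone_diff_Inr[OF fvec_finite_support[OF w]])
  then show "v = lapply (cone_diff DT DB phi (Suc n)) ?w" by auto
qed

lemma cone_cycleD:
  assumes fin: "finite {c. v c \<noteq> 0}" and cycle: "lapply (cone_diff DT DB phi n) v = (\<lambda>_. 0)"
  shows "n \<ge> 2 \<Longrightarrow> lapply (DT (n - 1)) (\<lambda>a. v (Inl a)) = (\<lambda>_. 0)"
    and "lapply (phi (n - 1)) (\<lambda>a. v (Inl a)) b' + lapply (DB n) (\<lambda>b. v (Inr b)) b' = 0"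
proof -
  show "lapply (DT (n - 1)) (\<lambda>a. v (Inl a)) = (\<lambda>_. 0)" if "n \<ge> 2"
    using fun_cong[OF cycle, of "Inl _"] that by (simp add: lapply_cone_diff_Inl[OF fin] fun_eq_iff)
  show "lapply (phi (n - 1)) (\<lambda>a. v (Inl a)) b' + lapply (DB n) (\<lambda>b. v (Inr b)) b' = 0"
    using fun_cong[OF cycle, of "Inr b'"] by (simp add: lapply_cone_diff_Inr[OF fin])
qed

section \<open>Products with principal ideals\<close>

lemma ideal_mult_right:
  assumes A: "is_ideal A"
  shows "is_ideal {r * d | r. r \<in> A}"
  unfolding is_ideal_def
proof (intro conjI ballI allI)
  have "0 \<in> A" using A by (simp add: is_ideal_def)
  then show "0 \<in> {r * d | r. r \<in> A}" by (intro CollectI exI[of _ 0]) simp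
next
  fix x y assume "x \<in> {r * d | r. r \<in> A}" "y \<in> {r * d | r. r \<in> A}"
  then obtain r s where "x = r * d" "y = s * d" "r \<in> A" "s \<in> A" by blast
  moreover have "r + s \<in> A" using A calculation by (simp add: is_ideal_def)
  ultimately show "x + y \<in> {r * d | r. r \<in> A}" by (intro CollectI exI[of _ "r + s"]) (simp add: distrib_right)
next
  fix s x assume "x \<in> {r * d | r. r \<in> A}"
  then obtain r where "x = r * d" "r \<in> A" by blast
  moreover have "s * r \<in> A" using A calculation by (simp add: is_ideal_def)
  ultimately show "s * x \<in> {r * d | r. r \<in> A}" by (intro CollectI exI[of _ "s * r"]) (simp add: mult.assoc)
qed

lemma ideal_gen_least: "is_ideal I \<Longrightarrow> S \<subseteq> I \<Longrightarrow> ideal_gen S \<subseteq> I"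
  unfolding ideal_gen_def by blast

lemma ideal_gen_superset: "S \<subseteq> ideal_gen S"
  unfolding ideal_gen_def by blast

lemma ideal_prod_principal:
  assumes A: "is_ideal A"
  shows "ideal_prod A (ideal_gen {d}) = {r * d | r. r \<in> A}"
proof
  have UNIV: "is_ideal (UNIV :: 'a set)"
    by (simp add: is_ideal_def)
  have "ideal_gen {d} \<subseteq> {s * d | s. s \<in> UNIV}"
    by (rule ideal_gen_least[OF ideal_mult_right[OF UNIV]]) (auto intro: exI[of _ 1])
  have "x * (s * d) \<in> {r * d | r. r \<in> A}" if "x \<in> A" for x s
  proof (intro CollectI exI conjI)
    show "s * x \<in> A" using that A by (simp add: is_ideal_def)
  qed (simp add: mult_ac)
  with \<open>ideal_gen {d} \<subseteq> _\<close> have "{x * y |x y. x \<in> A \<and> y \<in> ideal_gen {d}} \<subseteq> {r * d | r. r \<in> A}"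
    by blast
  then show "ideal_prod A (ideal_gen {d}) \<subseteq> {r * d | r. r \<in> A}"
    unfolding ideal_prod_def by (rule ideal_gen_least[OF ideal_mult_right[OF A]])
  show "{r * d | r. r \<in> A} \<subseteq> ideal_prod A (ideal_gen {d})"
    unfolding ideal_prod_def
    using ideal_gen_superset[of "{d}"] ideal_gen_superset[of "{x * y |x y. x \<in> A \<and> y \<in> ideal_gen {d}}"]
    by blast
qed

section \<open>The iterated trimming complex\<close>

locale trimming =
  fixes I :: "'r::comm_ring_1 set"
    and BF :: "nat \<Rightarrow> nat set" and dF :: "nat \<Rightarrow> nat \<Rightarrow> nat \<Rightarrow> 'r"
    and t :: nat and e0 :: "nat \<Rightarrow> nat"
    and a :: "nat \<Rightarrow> 'r set"
    and BG :: "nat \<Rightarrow> nat \<Rightarrow> nat set" and mG :: "nat \<Rightarrow> nat \<Rightarrow> nat \<Rightarrow> nat \<Rightarrow> 'r"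
    and q :: "nat \<Rightarrow> nat \<Rightarrow> nat \<Rightarrow> nat \<Rightarrow> 'r"
  assumes F_res: "free_res BF dF I" and F0: "BF 0 = {0}"
    and e0_inj: "inj_on e0 {1..t}" and e0_basis: "e0 ` {1..t} \<subseteq> BF 1"
    and a_ideal: "\<forall>i\<in>{1..t}. is_ideal (a i)"
    and G_res: "\<forall>i\<in>{1..t}. free_res (BG i) (mG i) (a i) \<and> BG i 0 = {0}"
    and q_hom: "\<forall>i\<in>{1..t}. \<forall>k\<ge>1. is_hom (BF (Suc k)) (BG i k) (q i k)"
    and q_1: "\<forall>i\<in>{1..t}. \<forall>v\<in>fvec (BF 2).
               lapply (mG i 1) (lapply (q i 1) v) = (\<lambda>c. if c = 0 then lapply (dF 2) v (e0 i) else 0)"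
    and q_k: "\<forall>i\<in>{1..t}. \<forall>k\<ge>2. \<forall>v\<in>fvec (BF (Suc k)).
               lapply (mG i k) (lapply (q i k) v) = lapply (q i (k - 1)) (lapply (dF (Suc k)) v)"
begin

abbreviation "E \<equiv> e0 ` {1..t}"
abbreviation "BT \<equiv> T_basis BF e0 t"
abbreviation "DT \<equiv> T_diff dF e0 t"
abbreviation "BB \<equiv> B_basis BG t"
abbreviation "DB \<equiv> B_diff mG dF e0"
abbreviation "PH \<equiv> trim_phi dF q t"
abbreviation "CB \<equiv> cone_basis BT BB"
abbreviation "CD \<equiv> cone_diff DT DB PH"

lemma F_complex: "free_complex BF dF"
  using F_res by (simp add: free_res_def)

lemma F_hom: "n \<ge> 1 \<Longrightarrow> is_hom (BF n) (BF (n - 1)) (dF n)"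
  using F_complex unfolding free_complex_def by blast

lemma F_dd: "n \<ge> 1 \<Longrightarrow> v \<in> fvec (BF (Suc n)) \<Longrightarrow> lapply (dF n) (lapply (dF (Suc n)) v) = (\<lambda>_. 0)"
  using F_complex unfolding free_complex_def by blast

lemma F_exact:
  assumes "n \<ge> 1" "v \<in> fvec (BF n)" "lapply (dF n) v = (\<lambda>_. 0)"
  shows "v \<in> lapply (dF (Suc n)) ` fvec (BF (Suc n))"
proof -
  have "\<forall>n\<ge>1. {v \<in> fvec (BF n). lapply (dF n) v = (\<lambda>_. 0)} = lapply (dF (Suc n)) ` fvec (BF (Suc n))"
    using F_res by (simp add: free_res_def)
  with assms show ?thesis by blast
qed

lemma G_complex: "i \<in> {1..t} \<Longrightarrow> free_complex (BG i) (mG i)"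
  using G_res by (simp add: free_res_def)

lemma G_hom: "i \<in> {1..t} \<Longrightarrow> n \<ge> 1 \<Longrightarrow> is_hom (BG i n) (BG i (n - 1)) (mG i n)"
  using G_complex unfolding free_complex_def by blast

lemma G_dd:
  "i \<in> {1..t} \<Longrightarrow> n \<ge> 1 \<Longrightarrow> v \<in> fvec (BG i (Suc n)) \<Longrightarrow> lapply (mG i n) (lapply (mG i (Suc n)) v) = (\<lambda>_. 0)"
  using G_complex unfolding free_complex_def by blast

lemma G_exact:
  assumes "i \<in> {1..t}" "n \<ge> 1" "v \<in> fvec (BG i n)" "lapply (mG i n) v = (\<lambda>_. 0)"
  shows "v \<in> lapply (mG i (Suc n)) ` fvec (BG i (Suc n))"
proof -
  have "\<forall>n\<ge>1. {v \<in> fvec (BG i n). lapply (mG i n) v = (\<lambda>_. 0)} = lapply (mG i (Suc n)) ` fvec (BG i (Suc n))"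
    using G_res assms(1) by (simp add: free_res_def)
  with assms show ?thesis by blast
qed

lemma G_0: "i \<in> {1..t} \<Longrightarrow> BG i 0 = {0}"
  using G_res by blast

lemma G_image:
  assumes i: "i \<in> {1..t}"
  shows "{lapply (mG i 1) v 0 |v. v \<in> fvec (BG i 1)} = a i"
proof -
  have "free_res (BG i) (mG i) (a i)"
    using G_res i by blast
  then obtain b0 where "BG i 0 = {b0}" and "{lapply (mG i 1) v b0 |v. v \<in> fvec (BG i 1)} = a i"
    unfolding free_res_def by (elim conjE exE)
  with G_0[OF i] show ?thesis by simp
qed

lemma BT_0: "BT 0 = BF 1 - E"
  by (simp add: T_basis_def)

lemma BT_pos: "n \<ge> 1 \<Longrightarrow> BT n = BF (Suc n)"
  by (simp add: T_basis_def)

lemma BB_0: "BB 0 = {(0, 0)}"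
  by (simp add: B_basis_def)

lemma BB_pos: "n \<ge> 1 \<Longrightarrow> BB n = Sigma {1..t} (\<lambda>i. BG i n)"
  by (auto simp: B_basis_def)

lemma DT_ge2: "n \<ge> 2 \<Longrightarrow> DT n = dF (Suc n)"
  by (auto simp: T_diff_def fun_eq_iff)

lemma lapply_DT_1: "lapply (DT 1) w = (\<lambda>j. if j \<in> E then 0 else lapply (dF 2) w j)"
  by (simp add: T_diff_def lapply_def fun_eq_iff)

lemma DB_ge2: "n \<ge> 2 \<Longrightarrow> DB n = diag_sum (\<lambda>i. mG i n)"
  by (auto simp: B_diff_def diag_sum_def fun_eq_iff)

lemma lapply_DB_1:
  assumes g: "g \<in> fvec (BB 1)"
  shows "lapply (DB 1) g c =
           (if c = (0, 0) then - (\<Sum>i\<in>{1..t}. lapply (mG i 1) (\<lambda>x. g (i, x)) 0 * dF 1 (e0 i) 0) else 0)"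
proof -
  have "lapply (DB 1) g c = (\<Sum>i\<in>{1..t}. lapply (\<lambda>x. DB 1 (i, x)) (\<lambda>x. g (i, x)) c)"
    using lapply_Sigma[of "{1..t}" g] g BB_pos[of 1] by simp
  also have "\<dots> = (\<Sum>i\<in>{1..t}. if c = (0, 0) then - (lapply (mG i 1) (\<lambda>x. g (i, x)) 0 * dF 1 (e0 i) 0) else 0)"
    by (intro sum.cong) (auto simp: lapply_def B_diff_def sum_distrib_right sum_negf mult.assoc)
  finally show ?thesis by (simp add: sum_negf)
qed

lemma lapply_PH_0: "lapply (PH 0) v = (\<lambda>c. if c = (0, 0) then lapply (dF 1) v 0 else 0)"
  by (simp add: trim_phi_def lapply_def fun_eq_iff)

lemma lapply_PH_pos:
  "n \<ge> 1 \<Longrightarrow> lapply (PH n) v (i, x) = (if i \<in> {1..t} then lapply (q i n) v x else 0)"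
  by (auto simp: trim_phi_def lapply_def)

lemma is_hom_DT: "n \<ge> 1 \<Longrightarrow> is_hom (BT n) (BT (n - 1)) (DT n)"
proof (cases "n = 1")
  case True
  have "DT 1 j \<in> fvec (BF 1 - E)" if "j \<in> BF 2" for j
  proof (rule fvecI)
    have col: "dF 2 j \<in> fvec (BF 1)"
      using F_hom[of 2] that unfolding is_hom_def by simp
    have DT_1: "DT 1 j = (\<lambda>j'. if j' \<in> E then 0 else dF 2 j j')"
      by (simp add: T_diff_def fun_eq_iff)
    have "{j'. DT 1 j j' \<noteq> 0} \<subseteq> {j'. dF 2 j j' \<noteq> 0}"
      unfolding DT_1 by auto
    then show "finite {j'. DT 1 j j' \<noteq> 0}"
      using fvec_finite_support[OF col] by (rule finite_subset)
    show "DT 1 j j' = 0" if "j' \<notin> BF 1 - E" for j'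
      unfolding DT_1 using that fvec_vanishes[OF col] by auto
  qed
  then show ?thesis
    using True by (simp add: is_hom_def BT_0 BT_pos numeral_2_eq_2)
next
  case False
  moreover assume "n \<ge> 1"
  ultimately show ?thesis
    using F_hom[of "Suc n"] by (simp add: DT_ge2 BT_pos)
qed

lemma T_dd: "n \<ge> 1 \<Longrightarrow> v \<in> fvec (BT (Suc n)) \<Longrightarrow> lapply (DT n) (lapply (DT (Suc n)) v) = (\<lambda>_. 0)"
proof (cases "n = 1")
  case True
  moreover assume "v \<in> fvec (BT (Suc n))"
  ultimately have "v \<in> fvec (BF 3)"
    by (simp add: BT_pos numeral_3_eq_3)
  moreover have DT_2: "DT 2 = dF 3"
    using DT_ge2[of 2] by simp
  ultimately have "lapply (DT 1) (lapply (DT 2) v) = (\<lambda>_. 0)"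
    unfolding lapply_DT_1 DT_2 using F_dd[of 2 v] by (simp add: fun_eq_iff)
  then show ?thesis
    unfolding True Suc_1 .
next
  case False
  moreover assume "n \<ge> 1" "v \<in> fvec (BT (Suc n))"
  ultimately show ?thesis
    using F_dd[of "Suc n" v] by (simp add: DT_ge2 BT_pos)
qed

lemma T_complex: "free_complex BT DT"
  unfolding free_complex_def using is_hom_DT T_dd by blast

lemma DB_slice:
  assumes "n \<ge> 2" and "finite {c. v c \<noteq> 0}"
  shows "(\<lambda>x. lapply (DB n) v (i, x)) = lapply (mG i n) (\<lambda>x. v (i, x))"
  using assms by (simp add: DB_ge2 lapply_diag_sum fun_eq_iff)

lemma is_hom_DB: "n \<ge> 1 \<Longrightarrow> is_hom (BB n) (BB (n - 1)) (DB n)"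
proof (cases "n = 1")
  case True
  have "DB 1 c \<in> fvec {(0, 0)}" for c
    by (rule fvecI) (auto simp: B_diff_def intro: finite_subset[of _ "{(0, 0)}"])
  then show ?thesis
    using True by (simp add: is_hom_def BB_0)
next
  case False
  moreover assume "n \<ge> 1"
  ultimately show ?thesis
    using G_hom by (simp add: DB_ge2 BB_pos is_hom_diag_sum)
qed

lemma B_dd:
  assumes n: "n \<ge> 1" and b: "b \<in> fvec (BB (Suc n))"
  shows "lapply (DB n) (lapply (DB (Suc n)) b) = (\<lambda>_. 0)"
proof -
  have b_fin: "finite {c. b c \<noteq> 0}" and Db: "lapply (DB (Suc n)) b \<in> fvec (BB n)"
    using b lapply_fvec[OF is_hom_DB b] by (simp_all add: fvec_finite_support)
  have slice: "(\<lambda>x. lapply (DB (Suc n)) b (i, x)) = lapply (mG i (Suc n)) (\<lambda>x. b (i, x))" for i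
    using n DB_slice[OF _ b_fin] by simp
  have b_Sigma: "b \<in> fvec (Sigma {1..t} (\<lambda>i. BG i (Suc n)))"
    using b BB_pos by simp
  have mm: "lapply (mG i n) (lapply (mG i (Suc n)) (\<lambda>x. b (i, x))) y = 0" for i y
  proof (cases "i \<in> {1..t}")
    case True
    then show ?thesis
      using G_dd[OF True n fvec_Sigma_slice[OF b_Sigma]] by simp
  next
    case False
    then have "(\<lambda>x. b (i, x)) = (\<lambda>_. 0)"
      using fvec_vanishes[OF b] BB_pos n by auto
    then show ?thesis by (simp add: lapply_zero)
  qed
  show ?thesis
  proof (cases "n = 1")
    case True
    have "lapply (DB 1) (lapply (DB 2) b) c = 0" for c
      using lapply_DB_1[OF Db[unfolded True Suc_1], of c] mm slice[symmetric]
      unfolding True Suc_1 by simp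
    then show ?thesis
      unfolding True Suc_1 by auto
  next
    case False
    have "lapply (DB n) (lapply (DB (Suc n)) b) (i, y) = 0" for i y
      using False n mm fun_cong[OF DB_slice[OF _ fvec_finite_support[OF Db]], of n i y] slice
      by simp
    then show ?thesis by auto
  qed
qed

lemma B_complex: "free_complex BB DB"
  unfolding free_complex_def using is_hom_DB B_dd by blast

lemma is_hom_PH: "is_hom (BT n) (BB n) (PH n)"
  unfolding is_hom_def
proof
  fix j assume j: "j \<in> BT n"
  show "PH n j \<in> fvec (BB n)"
  proof (cases "n = 0")
    case True
    then show ?thesis
      by (auto simp: BB_0 trim_phi_def split: if_splits intro!: fvecI intro: finite_subset[of _ "{(0, 0)}"])
  next
    case False
    then have "PH n j = (\<lambda>c. if fst c \<in> {1..t} then q (fst c) n j (snd c) else 0)"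
      by (simp add: trim_phi_def fun_eq_iff)
    moreover have "\<forall>i\<in>{1..t}. q i n j \<in> fvec (BG i n)"
      using q_hom j False BT_pos unfolding is_hom_def by simp
    ultimately show ?thesis
      using False fvec_Sigma_glue[of "{1..t}" "\<lambda>i. q i n j" "\<lambda>i. BG i n"] by (simp add: BB_pos)
  qed
qed

lemma PH_slice:
  "n \<ge> 1 \<Longrightarrow> i \<in> {1..t} \<Longrightarrow> (\<lambda>x. lapply (PH n) v (i, x)) = lapply (q i n) v"
  by (simp add: lapply_PH_pos fun_eq_iff)

lemma PH_chain_1:
  assumes v: "v \<in> fvec (BF 2)"
  shows "lapply (PH 0) (lapply (DT 1) v) = lapply (DB 1) (lapply (PH 1) v)"
proof -
  let ?d = "lapply (dF 2) v"
  have d: "?d \<in> fvec (BF 1)"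
    using lapply_fvec[OF F_hom[of 2] v] by simp
  have split: "lapply (dF 1) ?d 0 = lapply (dF 1) (lapply (DT 1) v) 0 + (\<Sum>i\<in>{1..t}. ?d (e0 i) * dF 1 (e0 i) 0)"
    unfolding lapply_DT_1 by (rule lapply_split_image[OF fvec_finite_support[OF d] _ e0_inj]) simp
  have dd: "lapply (dF 1) ?d 0 = 0"
    using F_dd[of 1 v] v by (simp add: numeral_2_eq_2)
  have m_PH: "lapply (mG i 1) (\<lambda>x. lapply (PH 1) v (i, x)) 0 = ?d (e0 i)" if "i \<in> {1..t}" for i
    using that q_1 v by (simp add: PH_slice)
  have "lapply (PH 1) v \<in> fvec (BB 1)"
    using lapply_fvec[OF is_hom_PH] v BT_pos[of 1] by (simp add: numeral_2_eq_2)
  from lapply_DB_1[OF this] show ?thesis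
    unfolding lapply_PH_0 using split dd m_PH by (simp add: fun_eq_iff eq_neg_iff_add_eq_0)
qed

lemma PH_chain_ge2:
  assumes n: "n \<ge> 2" and v: "v \<in> fvec (BF (Suc n))"
  shows "lapply (PH (n - 1)) (lapply (DT n) v) = lapply (DB n) (lapply (PH n) v)"
proof -
  have PHv: "lapply (PH n) v \<in> fvec (BB n)"
    using lapply_fvec[OF is_hom_PH] v n BT_pos by simp
  have "lapply (PH (n - 1)) (lapply (DT n) v) (i, y) = lapply (DB n) (lapply (PH n) v) (i, y)" for i y
  proof (cases "i \<in> {1..t}")
    case True
    then show ?thesis
      using n v q_k fun_cong[OF DB_slice[OF n fvec_finite_support[OF PHv], of i], of y]
      by (simp add: lapply_PH_pos PH_slice DT_ge2)
  next
    case False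
    then have "(\<lambda>x. lapply (PH n) v (i, x)) = (\<lambda>_. 0)"
      using n by (auto simp: lapply_PH_pos)
    then show ?thesis
      using False n fun_cong[OF DB_slice[OF n fvec_finite_support[OF PHv], of i], of y]
      by (auto simp: lapply_PH_pos lapply_zero)
  qed
  then show ?thesis by auto
qed

lemma chain_map_PH: "chain_map BT DT BB DB PH"
  unfolding chain_map_def
proof (intro conjI allI impI ballI)
  show "is_hom (BT n) (BB n) (PH n)" for n
    by (rule is_hom_PH)
  show "lapply (PH (n - 1)) (lapply (DT n) v) = lapply (DB n) (lapply (PH n) v)"
    if "n \<ge> 1" and "v \<in> fvec (BT n)" for n v
    using that PH_chain_1 PH_chain_ge2[of n v]
    by (cases "n = 1") (simp_all add: BT_pos numeral_2_eq_2)
qed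

lemma cone_boundary_of_lift:
  assumes n: "n \<ge> 1" and v: "v \<in> fvec (CB n)"
    and a0: "a0 \<in> fvec (BF (Suc n))" and a0_T: "lapply (DT n) a0 = (\<lambda>a. v (Inl a))"
    and a0_G: "\<And>i y. i \<in> {1..t} \<Longrightarrow>
                  lapply (mG i n) (\<lambda>x. v (Inr (i, x))) y + lapply (mG i n) (lapply (q i n) a0) y = 0"
  shows "v \<in> lapply (CD (Suc n)) ` fvec (CB (Suc n))"
proof -
  define u where "u c = v (Inr c) + lapply (PH n) a0 c" for c
  have a0': "a0 \<in> fvec (BT n)"
    using a0 n by (simp add: BT_pos)
  have u: "u \<in> fvec (Sigma {1..t} (\<lambda>i. BG i n))"
    unfolding u_def[abs_def]
    using fvec_add[of "\<lambda>b. v (Inr b)" "BB n"] v lapply_fvec[OF is_hom_PH a0'] n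
    by (simp add: fvec_cone_basis_iff BB_pos)
  have slices: "(\<lambda>x. u (i, x)) \<in> lapply (mG i (Suc n)) ` fvec (BG i (Suc n))" if i: "i \<in> {1..t}" for i
  proof (rule G_exact[OF i n])
    show "(\<lambda>x. u (i, x)) \<in> fvec (BG i n)"
      using fvec_Sigma_slice[OF u] .
    have vr_i: "(\<lambda>x. v (Inr (i, x))) \<in> fvec (BG i n)"
      using v n fvec_Sigma_slice[of "\<lambda>b. v (Inr b)" "{1..t}" "\<lambda>i. BG i n"]
      by (simp add: fvec_cone_basis_iff BB_pos)
    have q_i: "is_hom (BF (Suc n)) (BG i n) (q i n)"
      using q_hom i n by simp
    have "lapply (mG i n) (\<lambda>x. v (Inr (i, x)) + lapply (q i n) a0 x) y = 0" for y
      unfolding lapply_add[OF fvec_finite_support[OF vr_i] fvec_finite_support[OF lapply_fvec[OF q_i a0]]]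
      by (rule a0_G[OF i])
    then show "lapply (mG i n) (\<lambda>x. u (i, x)) = (\<lambda>_. 0)"
      using i n by (simp add: u_def lapply_PH_pos fun_eq_iff)
  qed
  have "u \<in> lapply (diag_sum (\<lambda>i. mG i (Suc n))) ` fvec (Sigma {1..t} (\<lambda>i. BG i (Suc n)))"
    by (rule diag_sum_boundaryI[OF _ u]) (use slices in auto)
  then obtain br where br: "br \<in> fvec (Sigma {1..t} (\<lambda>i. BG i (Suc n)))"
    and br_u: "lapply (diag_sum (\<lambda>i. mG i (Suc n))) br = u"
    by blast
  show ?thesis
  proof (rule cone_boundaryI[where al = "\<lambda>j. - a0 j"])
    show "(\<lambda>j. - a0 j) \<in> fvec (BT n)"
      using fvec_uminus[OF a0'] .
    show "br \<in> fvec (BB (Suc n))"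
      using br by (simp add: BB_pos)
    show "v (Inl a') = - lapply (DT n) (\<lambda>j. - a0 j) a'" for a'
      using a0_T by (simp add: lapply_uminus)
    show "v (Inr b') = lapply (PH n) (\<lambda>j. - a0 j) b' + lapply (DB (Suc n)) br b'" for b'
      using n br_u by (simp add: lapply_uminus DB_ge2 u_def)
  qed (rule n)
qed

lemma lapply_CD_1_base:
  assumes v: "v \<in> fvec (CB 1)"
  shows "lapply (CD 1) v (Inr (0, 0)) =
           lapply (dF 1) (\<lambda>a. v (Inl a)) 0 + (\<Sum>i\<in>{1..t}. - lapply (mG i 1) (\<lambda>x. v (Inr (i, x))) 0 * dF 1 (e0 i) 0)"
proof -
  have "(\<lambda>b. v (Inr b)) \<in> fvec (BB 1)"
    using v by (simp add: fvec_cone_basis_iff)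
  from lapply_DB_1[OF this, of "(0, 0)"] show ?thesis
    unfolding lapply_cone_diff_Inr[OF fvec_finite_support[OF v]]
    by (simp add: sum_negf lapply_PH_0)
qed

lemma cone_cycle_1_F_cycle:
  assumes v: "v \<in> fvec (CB 1)" and cycle: "lapply (CD 1) v = (\<lambda>_. 0)"
  obtains u where "u \<in> fvec (BF 1)" and "lapply (dF 1) u = (\<lambda>_. 0)"
    and "(\<lambda>j. if j \<in> E then 0 else u j) = (\<lambda>a. v (Inl a))"
    and "\<And>i. i \<in> {1..t} \<Longrightarrow> u (e0 i) = - lapply (mG i 1) (\<lambda>x. v (Inr (i, x))) 0"
proof -
  let ?vl = "\<lambda>a. v (Inl a)"
  define c where "c i = - lapply (mG i 1) (\<lambda>x. v (Inr (i, x))) 0" for i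
  define u where "u j = (if j \<in> E then c (the_inv_into {1..t} e0 j) else ?vl j)" for j
  have vl: "?vl \<in> fvec (BF 1 - E)"
    using v by (simp add: fvec_cone_basis_iff BT_0)
  have u_e0: "u (e0 i) = c i" if "i \<in> {1..t}" for i
    using that the_inv_into_f_f[OF e0_inj that] by (simp add: u_def)
  have u_off_E: "(\<lambda>j. if j \<in> E then 0 else u j) = ?vl"
    using fvec_vanishes[OF vl] by (auto simp: u_def)
  have u: "u \<in> fvec (BF 1)"
  proof (rule fvecI)
    have "{j. u j \<noteq> 0} \<subseteq> {j. ?vl j \<noteq> 0} \<union> E"
      by (auto simp: u_def split: if_splits)
    then show "finite {j. u j \<noteq> 0}"
      by (rule finite_subset) (use fvec_finite_support[OF vl] in simp)
    show "u j = 0" if "j \<notin> BF 1" for j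
      using that e0_basis fvec_vanishes[OF vl] by (auto simp: u_def)
  qed
  text \<open>The base component of the cycle condition is exactly d_1 u = 0.\<close>
  have "lapply (dF 1) u 0 = lapply (dF 1) ?vl 0 + (\<Sum>i\<in>{1..t}. c i * dF 1 (e0 i) 0)"
    using lapply_split_image[OF fvec_finite_support[OF u] _ e0_inj, of "dF 1" 0]
    unfolding u_off_E by (simp add: u_e0)
  also have "\<dots> = lapply (CD 1) v (Inr (0, 0))"
    unfolding lapply_CD_1_base[OF v] c_def ..
  finally have u_0: "lapply (dF 1) u 0 = 0"
    using cycle by simp
  have "lapply (dF 1) u j = 0" for j
  proof (cases "j = 0")
    case False
    then show ?thesis
      using lapply_fvec[OF F_hom[of 1] u] F0 fvec_vanishes by fastforce
  qed (use u_0 in simp)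
  then have "lapply (dF 1) u = (\<lambda>_. 0)"
    by auto
  from that[OF u this u_off_E] show ?thesis
    by (simp add: u_e0 c_def)
qed

lemma cone_exact_1:
  assumes v: "v \<in> fvec (CB 1)" and cycle: "lapply (CD 1) v = (\<lambda>_. 0)"
  shows "v \<in> lapply (CD 2) ` fvec (CB 2)"
proof -
  let ?vr = "\<lambda>i x. v (Inr (i, x))"
  obtain u where u: "u \<in> fvec (BF 1)" and du: "lapply (dF 1) u = (\<lambda>_. 0)"
    and u_off_E: "(\<lambda>j. if j \<in> E then 0 else u j) = (\<lambda>a. v (Inl a))"
    and u_e0: "\<And>i. i \<in> {1..t} \<Longrightarrow> u (e0 i) = - lapply (mG i 1) (?vr i) 0"
    using cone_cycle_1_F_cycle[OF v cycle] by blast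
  from F_exact[OF order.refl u du] obtain a0 where a0: "a0 \<in> fvec (BF 2)" and a0_u: "lapply (dF 2) a0 = u"
    unfolding Suc_1 by blast
  have vr: "?vr i \<in> fvec (BG i 1)" for i
    using v fvec_Sigma_slice[of "\<lambda>b. v (Inr b)" "{1..t}" "\<lambda>i. BG i 1"]
    by (simp add: fvec_cone_basis_iff BB_pos)
  have "v \<in> lapply (CD (Suc 1)) ` fvec (CB (Suc 1))"
  proof (rule cone_boundary_of_lift[of 1 v a0])
    show "lapply (DT 1) a0 = (\<lambda>a. v (Inl a))"
      unfolding lapply_DT_1 a0_u u_off_E ..
    show "lapply (mG i 1) (?vr i) y + lapply (mG i 1) (lapply (q i 1) a0) y = 0" if i: "i \<in> {1..t}" for i y
    proof (cases "y = 0")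
      case True
      then show ?thesis
        using q_1 i a0 u_e0[OF i] by (simp add: a0_u)
    next
      case False
      have "lapply (mG i 1) (?vr i) \<in> fvec {0}"
        using lapply_fvec[OF G_hom[OF i] vr] G_0[OF i] by simp
      then show ?thesis
        using False q_1 i a0 fvec_vanishes by fastforce
    qed
  qed (use v a0 in \<open>simp_all add: numeral_2_eq_2\<close>)
  then show ?thesis
    unfolding Suc_1 .
qed

lemma cone_cycle_dF_2:
  assumes v: "v \<in> fvec (CB 2)" and cycle: "lapply (CD 2) v = (\<lambda>_. 0)"
  shows "lapply (dF 2) (\<lambda>a. v (Inl a)) = (\<lambda>_. 0)"
proof
  let ?vl = "\<lambda>a. v (Inl a)" and ?vr = "\<lambda>i x. v (Inr (i, x))"
  have vl: "?vl \<in> fvec (BF 2)" and vr_Sigma: "(\<lambda>b. v (Inr b)) \<in> fvec (Sigma {1..t} (\<lambda>i. BG i 2))"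
    using v by (simp_all add: fvec_cone_basis_iff BT_pos BB_pos numeral_2_eq_2)
  have DT_vl: "lapply (DT 1) ?vl = (\<lambda>_. 0)"
    using cone_cycleD(1)[OF fvec_finite_support[OF v] cycle] by simp
  have q_vl: "lapply (q i 1) ?vl = (\<lambda>x. - lapply (mG i 2) (?vr i) x)" if i: "i \<in> {1..t}" for i
  proof
    fix x
    have "lapply (PH 1) ?vl (i, x) + lapply (DB 2) (\<lambda>b. v (Inr b)) (i, x) = 0"
      using cone_cycleD(2)[OF fvec_finite_support[OF v] cycle] by simp
    then show "lapply (q i 1) ?vl x = - lapply (mG i 2) (?vr i) x"
      using i fun_cong[OF DB_slice[OF order.refl fvec_finite_support[OF vr_Sigma]], of i x]
      by (simp add: lapply_PH_pos eq_neg_iff_add_eq_0)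
  qed
  fix j
  show "lapply (dF 2) ?vl j = 0"
  proof (cases "j \<in> E")
    case False
    then show ?thesis
      using fun_cong[OF DT_vl, of j] unfolding lapply_DT_1 by simp
  next
    case True
    then obtain i where i: "i \<in> {1..t}" and j: "j = e0 i" by blast
    have "lapply (dF 2) ?vl (e0 i) = lapply (mG i 1) (lapply (q i 1) ?vl) 0"
      using q_1 i vl by simp
    also have "\<dots> = - lapply (mG i 1) (lapply (mG i 2) (?vr i)) 0"
      unfolding q_vl[OF i] lapply_uminus ..
    also have "\<dots> = 0"
      using G_dd[OF i order.refl, unfolded Suc_1, of "?vr i"] fvec_Sigma_slice[OF vr_Sigma] by simp
    finally show ?thesis
      unfolding j .
  qed
qed

lemma cone_exact_ge2:
  assumes n: "n \<ge> 2" and v: "v \<in> fvec (CB n)" and cycle: "lapply (CD n) v = (\<lambda>_. 0)"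
  shows "v \<in> lapply (CD (Suc n)) ` fvec (CB (Suc n))"
proof -
  let ?vl = "\<lambda>a. v (Inl a)" and ?vr = "\<lambda>i x. v (Inr (i, x))"
  have vl: "?vl \<in> fvec (BF n)" and vr: "(\<lambda>b. v (Inr b)) \<in> fvec (BB n)"
    using v n by (simp_all add: fvec_cone_basis_iff BT_pos)
  have "lapply (dF n) ?vl = (\<lambda>_. 0)"
  proof (cases "n = 2")
    case True
    then show ?thesis
      using cone_cycle_dF_2 v cycle by simp
  next
    case False
    then show ?thesis
      using cone_cycleD(1)[OF fvec_finite_support[OF v] cycle] n by (simp add: DT_ge2)
  qed
  then obtain a0 where a0: "a0 \<in> fvec (BF (Suc n))" and a0_vl: "lapply (dF (Suc n)) a0 = ?vl"
    using F_exact[OF _ vl] n by auto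
  show ?thesis
  proof (rule cone_boundary_of_lift[OF _ v a0])
    show "lapply (DT n) a0 = ?vl"
      using n a0_vl by (simp add: DT_ge2)
    show "lapply (mG i n) (?vr i) y + lapply (mG i n) (lapply (q i n) a0) y = 0" if i: "i \<in> {1..t}" for i y
    proof -
      have "lapply (mG i n) (?vr i) y + lapply (mG i n) (lapply (q i n) a0) y
            = lapply (DB n) (\<lambda>b. v (Inr b)) (i, y) + lapply (PH (n - 1)) ?vl (i, y)"
        using q_k i n a0 a0_vl fun_cong[OF DB_slice[OF n fvec_finite_support[OF vr], of i], of y]
        by (simp add: lapply_PH_pos)
      also have "\<dots> = 0"
        using cone_cycleD(2)[OF fvec_finite_support[OF v] cycle] by (simp add: add.commute)
      finally show ?thesis .
    qed
  qed (use n in simp)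
qed

lemma cone_exact:
  assumes "n \<ge> 1" and "v \<in> fvec (CB n)" and "lapply (CD n) v = (\<lambda>_. 0)"
  shows "v \<in> lapply (CD (Suc n)) ` fvec (CB (Suc n))"
proof (cases "n = 1")
  case True
  then show ?thesis
    using cone_exact_1 assms unfolding True Suc_1 by blast
next
  case False
  then show ?thesis
    using cone_exact_ge2 assms by simp
qed

lemma J_summand_iff:
  assumes i: "i \<in> {1..t}"
  shows "y \<in> ideal_prod (a i) (ideal_gen {dF 1 (e0 i) 0}) \<longleftrightarrow>
           (\<exists>g\<in>fvec (BG i 1). y = - lapply (mG i 1) g 0 * dF 1 (e0 i) 0)"
proof -
  have "y \<in> ideal_prod (a i) (ideal_gen {dF 1 (e0 i) 0}) \<longleftrightarrow> (\<exists>r\<in>a i. y = r * dF 1 (e0 i) 0)"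
    using a_ideal i by (auto simp: ideal_prod_principal)
  also have "\<dots> \<longleftrightarrow> (\<exists>g\<in>fvec (BG i 1). y = lapply (mG i 1) g 0 * dF 1 (e0 i) 0)"
    unfolding G_image[OF i, symmetric] by blast
  also have "\<dots> \<longleftrightarrow> (\<exists>g\<in>fvec (BG i 1). y = - lapply (mG i 1) g 0 * dF 1 (e0 i) 0)"
  proof
    assume "\<exists>g\<in>fvec (BG i 1). y = lapply (mG i 1) g 0 * dF 1 (e0 i) 0"
    then obtain g where "g \<in> fvec (BG i 1)" and "y = lapply (mG i 1) g 0 * dF 1 (e0 i) 0" ..
    then show "\<exists>g\<in>fvec (BG i 1). y = - lapply (mG i 1) g 0 * dF 1 (e0 i) 0"
      by (intro bexI[of _ "\<lambda>j. - g j"]) (simp_all add: lapply_uminus fvec_uminus)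
  next
    assume "\<exists>g\<in>fvec (BG i 1). y = - lapply (mG i 1) g 0 * dF 1 (e0 i) 0"
    then obtain g where "g \<in> fvec (BG i 1)" and "y = - lapply (mG i 1) g 0 * dF 1 (e0 i) 0" ..
    then show "\<exists>g\<in>fvec (BG i 1). y = lapply (mG i 1) g 0 * dF 1 (e0 i) 0"
      by (intro bexI[of _ "\<lambda>j. - g j"]) (simp_all add: lapply_uminus fvec_uminus)
  qed
  finally show ?thesis .
qed

lemma cone_image: "{lapply (CD 1) v (Inr (0, 0)) |v. v \<in> fvec (CB 1)} = trim_J BF dF e0 t a"
proof
  show "{lapply (CD 1) v (Inr (0, 0)) |v. v \<in> fvec (CB 1)} \<subseteq> trim_J BF dF e0 t a"
  proof safe
    fix v :: "nat + nat \<times> nat \<Rightarrow> 'r" assume v: "v \<in> fvec (CB 1)"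
    have vl: "(\<lambda>a. v (Inl a)) \<in> fvec (BF 1 - E)" and vr: "(\<lambda>b. v (Inr b)) \<in> fvec (Sigma {1..t} (\<lambda>i. BG i 1))"
      using v by (simp_all add: fvec_cone_basis_iff BT_0 BB_pos)
    have "\<forall>i\<in>{1..t}. - lapply (mG i 1) (\<lambda>x. v (Inr (i, x))) 0 * dF 1 (e0 i) 0
                        \<in> ideal_prod (a i) (ideal_gen {dF 1 (e0 i) 0})"
      using J_summand_iff fvec_Sigma_slice[OF vr] by blast
    then show "lapply (CD 1) v (Inr (0, 0)) \<in> trim_J BF dF e0 t a"
      unfolding trim_J_def lapply_CD_1_base[OF v] using vl by blast
  qed
  show "trim_J BF dF e0 t a \<subseteq> {lapply (CD 1) v (Inr (0, 0)) |v. v \<in> fvec (CB 1)}"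
  proof
    fix z assume "z \<in> trim_J BF dF e0 t a"
    then obtain u y where z: "z = lapply (dF 1) u 0 + (\<Sum>i\<in>{1..t}. y i)" and u: "u \<in> fvec (BF 1 - E)"
      and y: "\<forall>i\<in>{1..t}. y i \<in> ideal_prod (a i) (ideal_gen {dF 1 (e0 i) 0})"
      unfolding trim_J_def by blast
    have "\<forall>i\<in>{1..t}. \<exists>g\<in>fvec (BG i 1). y i = - lapply (mG i 1) g 0 * dF 1 (e0 i) 0"
      using y J_summand_iff by blast
    then obtain g where g: "\<forall>i\<in>{1..t}. g i \<in> fvec (BG i 1) \<and> y i = - lapply (mG i 1) (g i) 0 * dF 1 (e0 i) 0"
      using bchoice[of "{1..t}"] by (metis (no_types, lifting))
    define w where "w = (\<lambda>c. if fst c \<in> {1..t} then g (fst c) (snd c) else 0)"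
    have w: "w \<in> fvec (Sigma {1..t} (\<lambda>i. BG i 1))"
      unfolding w_def by (rule fvec_Sigma_glue) (use g in auto)
    have v: "case_sum u w \<in> fvec (CB 1)"
      using u w by (simp add: fvec_cone_basis_iff BT_0 BB_pos)
    have "lapply (CD 1) (case_sum u w) (Inr (0, 0)) = z"
      unfolding lapply_CD_1_base[OF v] z using g by (simp add: w_def)
    with v show "z \<in> {lapply (CD 1) v (Inr (0, 0)) |v. v \<in> fvec (CB 1)}"
      by blast
  qed
qed

lemma cone_free_res: "free_res CB CD (trim_J BF dF e0 t a)"
proof -
  have cx: "free_complex CB CD"
    by (rule free_complex_cone[OF T_complex B_complex chain_map_PH])
  show ?thesis
    unfolding free_res_def
  proof (intro conjI exI allI impI)
    show "CB 0 = {Inr (0, 0)}"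
      by (simp add: cone_basis_def BB_0)
    show "{lapply (CD 1) v (Inr (0, 0)) |v. v \<in> fvec (CB 1)} = trim_J BF dF e0 t a"
      by (rule cone_image)
    show "{v \<in> fvec (CB n). lapply (CD n) v = (\<lambda>_. 0)} = lapply (CD (Suc n)) ` fvec (CB (Suc n))"
      if "n \<ge> 1" for n
      using free_complex_exactI[OF cx that] cone_exact[OF that] by blast
  qed (rule cx)
qed

end

theorem theorem3p4:
  fixes I :: "('v::finite, 'k::field) mpoly set"
    and BF :: "nat \<Rightarrow> nat set" and dF :: "nat \<Rightarrow> nat \<Rightarrow> nat \<Rightarrow> ('v, 'k) mpoly"
    and t :: nat and e0 :: "nat \<Rightarrow> nat"
    and a :: "nat \<Rightarrow> ('v, 'k) mpoly set"
    and BG :: "nat \<Rightarrow> nat \<Rightarrow> nat set" and mG :: "nat \<Rightarrow> nat \<Rightarrow> nat \<Rightarrow> nat \<Rightarrow> ('v, 'k) mpoly"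
    and q :: "nat \<Rightarrow> nat \<Rightarrow> nat \<Rightarrow> nat \<Rightarrow> ('v, 'k) mpoly"
  assumes I_homog: "homog_ideal I"
    and F_res: "homog_free_res BF dF I" and F0: "BF 0 = {0}"
    and e0_inj: "inj_on e0 {1..t}" and e0_basis: "e0 ` {1..t} \<subseteq> BF 1"
    and a_homog: "\<forall>i\<in>{1..t}. homog_ideal (a i)"
    and d0_a: "\<forall>i\<in>{1..t}. \<forall>v\<in>fvec (BF 2). lapply (dF 2) v (e0 i) \<in> a i"
    and G_res: "\<forall>i\<in>{1..t}. homog_free_res (BG i) (mG i) (a i) \<and> BG i 0 = {0}"
    and q_hom: "\<forall>i\<in>{1..t}. \<forall>k\<ge>1. is_hom (BF (Suc k)) (BG i k) (q i k)"
    and q_1: "\<forall>i\<in>{1..t}. \<forall>v\<in>fvec (BF 2).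
               lapply (mG i 1) (lapply (q i 1) v) = (\<lambda>c. if c = 0 then lapply (dF 2) v (e0 i) else 0)"
    and q_k: "\<forall>i\<in>{1..t}. \<forall>k\<ge>2. \<forall>v\<in>fvec (BF (Suc k)).
               lapply (mG i k) (lapply (q i k) v) = lapply (q i (k - 1)) (lapply (dF (Suc k)) v)"
  shows "chain_map (T_basis BF e0 t) (T_diff dF e0 t) (B_basis BG t) (B_diff mG dF e0) (trim_phi dF q t)
       \<and> free_res (cone_basis (T_basis BF e0 t) (B_basis BG t))
                  (cone_diff (T_diff dF e0 t) (B_diff mG dF e0) (trim_phi dF q t))
                  (trim_J BF dF e0 t a)"
proof -
  interpret trimming I BF dF t e0 a BG mG q
  proof
    show "free_res BF dF I"
      using F_res by (simp add: homog_free_res_def)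
    show "\<forall>i\<in>{1..t}. is_ideal (a i)"
      using a_homog by (simp add: homog_ideal_def)
    show "\<forall>i\<in>{1..t}. free_res (BG i) (mG i) (a i) \<and> BG i 0 = {0}"
      using G_res by (simp add: homog_free_res_def)
  qed (fact F0 e0_inj e0_basis q_hom q_1 q_k)+
  show ?thesis
    using chain_map_PH cone_free_res by blast
qed

end
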